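(* Let $X$ be a locally compact, completely regular Hausdorff ($T_{3\frac12}$) space, let $\hat X$ be any compactification of $X$, and let $a\subseteq X$. Then every end $e$ of $a$ has non-empty connected boundary $\partial e$.
   Context: An end of a subset $a\subseteq X$ is a function $e$ from the family of compact subsets of $X$ to subsets of $a$ such that: - for each compact $K\subseteq X$, $e(K)$ is a connected component of $a\setminus K$; - $e(K)\supseteq e(K')$ whenever $K\subseteq K'$ are compact. For $b\subseteq X$, its boundary is $\partial b=\overline{b}^{\hat X}\setminus X$, the closure of $b$ taken in $\hat X$, minus $X$. The boundary of the end $e$ is $\partial e=\bigcap_{K\subseteq X\text{ compact}}\partial e(K)$. *)

theory Defs
  imports "HOL-Analysis.Analysis"
begin

text \<open>The values of e on non-compact sets are irrelevant.\<close>
definition end_of :: "'a topology \<Rightarrow> 'a set \<Rightarrow> ('a set \<Rightarrow> 'a set) \<Rightarrow> bool" where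
  "end_of X a e \<longleftrightarrow>
     (\<forall>K. compactin X K \<longrightarrow> e K \<in> connected_components_of (subtopology X (a - K))) \<and>
     (\<forall>K K'. compactin X K \<and> compactin X K' \<and> K \<subseteq> K' \<longrightarrow> e K' \<subseteq> e K)"

definition compactification :: "'a topology \<Rightarrow> 'b topology \<Rightarrow> ('a \<Rightarrow> 'b) \<Rightarrow> bool" where
  "compactification X Y h \<longleftrightarrow>
     compact_space Y \<and> Hausdorff_space Y \<and> embedding_map X Y h \<and>
     Y closure_of (h ` topspace X) = topspace Y"

definition cboundary :: "'a topology \<Rightarrow> 'b topology \<Rightarrow> ('a \<Rightarrow> 'b) \<Rightarrow> 'a set \<Rightarrow> 'b set" where
  "cboundary X Y h b = (Y closure_of (h ` b)) - h ` topspace X"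

definition end_boundary :: "'a topology \<Rightarrow> 'b topology \<Rightarrow> ('a \<Rightarrow> 'b) \<Rightarrow> ('a set \<Rightarrow> 'a set) \<Rightarrow> 'b set" where
  "end_boundary X Y h e = (\<Inter>K\<in>{K. compactin X K}. cboundary X Y h (e K))"

end

theory Submission imports Defs begin

text \<open>The closures in \<open>Y\<close> of the sets \<open>e K\<close> form a downward directed family of nonempty
  closed connected subsets of the compact Hausdorff space \<open>Y\<close>, so their intersection is
  nonempty and connected. Local compactness of \<open>X\<close> makes that intersection disjoint from \<open>X\<close>:
  a point of \<open>X\<close> has a compact neighbourhood \<open>N\<close>, and \<open>e N\<close> avoids it. Hence the
  intersection is exactly the boundary of the end.\<close>

lemma compact_space_directed_Inter_subset_open:
  assumes "compact_space Y"
    and closed: "\<And>C. C \<in> \<C> \<Longrightarrow> closedin Y C"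
    and directed: "\<And>\<F>. finite \<F> \<Longrightarrow> \<F> \<subseteq> \<C> \<Longrightarrow> \<exists>C\<in>\<C>. C \<subseteq> \<Inter>\<F>"
    and "openin Y W" "\<Inter>\<C> \<subseteq> W"
  shows "\<exists>C\<in>\<C>. C \<subseteq> W"
proof -
  define \<U> where "\<U> = (\<lambda>C. C - W) ` \<C>"
  have "\<C> \<noteq> {}"
    using directed[of "{}"] by blast
  then have "\<Inter>\<U> = {}"
    using \<open>\<Inter>\<C> \<subseteq> W\<close> unfolding \<U>_def by blast
  moreover have "\<forall>D\<in>\<U>. closedin Y D"
    using closed closedin_diff \<open>openin Y W\<close> unfolding \<U>_def by blast
  ultimately obtain \<F> where "finite \<F>" "\<F> \<subseteq> \<U>" "\<Inter>\<F> = {}"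
    using \<open>compact_space Y\<close>[unfolded compact_space_fip, rule_format, of \<U>] by blast
  then obtain \<G> where \<G>: "finite \<G>" "\<G> \<subseteq> \<C>" "\<F> = (\<lambda>C. C - W) ` \<G>"
    unfolding \<U>_def by (meson finite_subset_image)
  then obtain C where "C \<in> \<C>" "C \<subseteq> \<Inter>\<G>"
    using directed by blast
  with \<G>(3) \<open>\<Inter>\<F> = {}\<close> have "C \<subseteq> W"
    by blast
  with \<open>C \<in> \<C>\<close> show ?thesis ..
qed

lemma compact_Hausdorff_directed_Inter_connected:
  assumes Y: "compact_space Y" "Hausdorff_space Y"
    and members: "\<And>C. C \<in> \<C> \<Longrightarrow> closedin Y C \<and> connectedin Y C \<and> C \<noteq> {}"
    and directed: "\<And>\<F>. finite \<F> \<Longrightarrow> \<F> \<subseteq> \<C> \<Longrightarrow> \<exists>C\<in>\<C>. C \<subseteq> \<Inter>\<F>"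
  shows "\<Inter>\<C> \<noteq> {} \<and> connectedin Y (\<Inter>\<C>)"
proof
  have closed: "\<And>C. C \<in> \<C> \<Longrightarrow> closedin Y C"
    using members by blast
  have cover: "\<exists>C\<in>\<C>. C \<subseteq> W" if "openin Y W" "\<Inter>\<C> \<subseteq> W" for W
    using Y(1) closed directed that by (rule compact_space_directed_Inter_subset_open)
  show "\<Inter>\<C> \<noteq> {}"
  proof
    assume "\<Inter>\<C> = {}"
    then obtain C where "C \<in> \<C>" "C \<subseteq> {}"
      using cover[OF openin_empty] by blast
    with members show False
      by blast
  qed
  have "\<C> \<noteq> {}"
    using directed[of "{}"] by blast
  then have closed_Inter: "closedin Y (\<Inter>\<C>)"
    using closed by (intro closedin_Inter) auto
  show "connectedin Y (\<Inter>\<C>)"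
    unfolding connectedin_closedin
  proof (intro conjI notI)
    show "\<Inter>\<C> \<subseteq> topspace Y"
      using closed_Inter closedin_subset by blast
  next
    assume "\<exists>E1 E2. closedin Y E1 \<and> closedin Y E2 \<and> \<Inter>\<C> \<subseteq> E1 \<union> E2 \<and>
      E1 \<inter> E2 \<inter> \<Inter>\<C> = {} \<and> E1 \<inter> \<Inter>\<C> \<noteq> {} \<and> E2 \<inter> \<Inter>\<C> \<noteq> {}"
    then obtain E1 E2 where E: "closedin Y E1" "closedin Y E2" "\<Inter>\<C> \<subseteq> E1 \<union> E2"
      "E1 \<inter> E2 \<inter> \<Inter>\<C> = {}" "E1 \<inter> \<Inter>\<C> \<noteq> {}" "E2 \<inter> \<Inter>\<C> \<noteq> {}"
      by blast
    have "compactin Y (E1 \<inter> \<Inter>\<C>)" "compactin Y (E2 \<inter> \<Inter>\<C>)"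
      using E closed_Inter Y(1) closedin_compact_space closedin_Int by blast+
    moreover have "disjnt (E1 \<inter> \<Inter>\<C>) (E2 \<inter> \<Inter>\<C>)"
      using E(4) by (auto simp: disjnt_def)
    ultimately obtain U V where UV: "openin Y U" "openin Y V" "E1 \<inter> \<Inter>\<C> \<subseteq> U"
      "E2 \<inter> \<Inter>\<C> \<subseteq> V" "disjnt U V"
      using Y(2) Hausdorff_space_compact_sets by metis
    then obtain C where C: "C \<in> \<C>" "C \<subseteq> U \<union> V"
      using cover[OF openin_Un[OF UV(1,2)]] E(3) UV(3,4) by blast
    have "U \<inter> C \<noteq> {}" "V \<inter> C \<noteq> {}"
      using E(5,6) UV(3,4) C(1) by blast+
    moreover have "U \<inter> V \<inter> C = {}"
      using UV(5) by (auto simp: disjnt_def)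
    ultimately show False
      using connectedinD[OF _ UV(1,2) C(2)] members C(1) by blast
  qed
qed

lemma end_of_connected_component:
  "end_of X a e \<Longrightarrow> compactin X K \<Longrightarrow> e K \<in> connected_components_of (subtopology X (a - K))"
  unfolding end_of_def by blast

lemma end_of_antimono:
  "end_of X a e \<Longrightarrow> compactin X K \<Longrightarrow> compactin X K' \<Longrightarrow> K \<subseteq> K' \<Longrightarrow> e K' \<subseteq> e K"
  unfolding end_of_def by blast

lemma end_of_subset: "end_of X a e \<Longrightarrow> compactin X K \<Longrightarrow> e K \<subseteq> a - K"
  by (metis connected_components_of_subset end_of_connected_component le_inf_iff
      topspace_subtopology)

lemma end_of_nonempty: "end_of X a e \<Longrightarrow> compactin X K \<Longrightarrow> e K \<noteq> {}"
  using end_of_connected_component nonempty_connected_components_of by blast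

lemma end_of_connectedin: "end_of X a e \<Longrightarrow> compactin X K \<Longrightarrow> connectedin X (e K)"
  using end_of_connected_component connectedin_connected_components_of connectedin_subtopology
  by blast

lemma embedding_map_notin_closure_of_image:
  assumes h: "embedding_map X Y h"
    and "openin X U" "x \<in> U" "B \<subseteq> topspace X" "B \<inter> U = {}"
  shows "h x \<notin> Y closure_of (h ` B)"
proof
  assume x_cl: "h x \<in> Y closure_of (h ` B)"
  have hom: "homeomorphic_map X (subtopology Y (h ` topspace X)) h"
    using h unfolding embedding_map_def .
  have "openin (subtopology Y (h ` topspace X)) (h ` U)"
    using homeomorphic_map_openness[OF hom openin_subset] \<open>openin X U\<close> by blast
  then obtain W where W: "openin Y W" "h ` U = W \<inter> h ` topspace X"
    unfolding openin_subtopology by blast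
  have "W \<inter> h ` B = {}"
  proof (intro equals0I)
    fix y
    assume "y \<in> W \<inter> h ` B"
    then obtain b where b: "b \<in> B" "y = h b" "h b \<in> W"
      by blast
    then obtain u where u: "u \<in> U" "h b = h u"
      using W(2) \<open>B \<subseteq> topspace X\<close> by blast
    then have "b = u"
      using homeomorphic_imp_injective_map[OF hom] b(1) \<open>B \<subseteq> topspace X\<close>
        openin_subset[OF \<open>openin X U\<close>] by (meson inj_onD subsetD)
    with b(1) u(1) \<open>B \<inter> U = {}\<close> show False
      by blast
  qed
  then have "W \<inter> Y closure_of (h ` B) = {}"
    using openin_Int_closure_of_eq_empty[OF W(1)] by blast
  moreover have "h x \<in> W"
    using W(2) \<open>x \<in> U\<close> by blast
  ultimately show False
    using x_cl by blast
qed

lemma end_boundary_eq_Inter_closure_of: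
  assumes "locally_compact_space X" "embedding_map X Y h" "a \<subseteq> topspace X" "end_of X a e"
  shows "end_boundary X Y h e = (\<Inter>K\<in>{K. compactin X K}. Y closure_of (h ` e K))"
proof -
  have "y \<notin> h ` topspace X" if y: "y \<in> (\<Inter>K\<in>{K. compactin X K}. Y closure_of (h ` e K))" for y
  proof
    assume "y \<in> h ` topspace X"
    then obtain x where x: "x \<in> topspace X" "y = h x"
      by blast
    then obtain U N where "openin X U" "compactin X N" "x \<in> U" "U \<subseteq> N"
      using \<open>locally_compact_space X\<close> unfolding locally_compact_space_def by blast
    moreover have "e N \<subseteq> topspace X" "e N \<inter> U = {}"
      using end_of_subset[OF \<open>end_of X a e\<close> \<open>compactin X N\<close>] \<open>a \<subseteq> topspace X\<close> \<open>U \<subseteq> N\<close>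
      by auto
    ultimately have "y \<notin> Y closure_of (h ` e N)"
      using embedding_map_notin_closure_of_image[OF \<open>embedding_map X Y h\<close>] x(2) by blast
    with y \<open>compactin X N\<close> show False
      by blast
  qed
  then show ?thesis
    unfolding end_boundary_def cboundary_def by auto
qed

lemma end_closure_of_image_directed:
  assumes "end_of X a e" "finite \<F>" "\<F> \<subseteq> (\<lambda>K. Y closure_of (h ` e K)) ` {K. compactin X K}"
  shows "\<exists>K. compactin X K \<and> Y closure_of (h ` e K) \<subseteq> \<Inter>\<F>"
proof -
  obtain \<K> where \<K>: "finite \<K>" "\<K> \<subseteq> {K. compactin X K}" "\<F> = (\<lambda>K. Y closure_of (h ` e K)) ` \<K>"
    using assms(2,3) by (meson finite_subset_image)
  then have "compactin X (\<Union>\<K>)"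
    by (intro compactin_Union) auto
  moreover have "Y closure_of (h ` e (\<Union>\<K>)) \<subseteq> Y closure_of (h ` e K)" if "K \<in> \<K>" for K
    using that \<K>(2) \<open>compactin X (\<Union>\<K>)\<close>
    by (intro closure_of_mono image_mono end_of_antimono[OF \<open>end_of X a e\<close>]) auto
  ultimately show ?thesis
    using \<K>(3) by blast
qed

theorem mainTheorem7:
  fixes X :: "'a topology" and Y :: "'b topology" and h :: "'a \<Rightarrow> 'b"
    and a :: "'a set" and e :: "'a set \<Rightarrow> 'a set"
  assumes "locally_compact_space X"
    and "completely_regular_space X"
    and "Hausdorff_space X"
    and "compactification X Y h"
    and "a \<subseteq> topspace X"
    and "end_of X a e"
  shows "end_boundary X Y h e \<noteq> {} \<and> connectedin Y (end_boundary X Y h e)"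
proof -
  have Y: "compact_space Y" "Hausdorff_space Y" and h: "embedding_map X Y h"
    using assms(4) unfolding compactification_def by auto
  have h_cont: "continuous_map X Y h"
    using homeomorphic_imp_continuous_map[OF h[unfolded embedding_map_def]]
      continuous_map_in_subtopology by blast
  define \<C> where "\<C> = (\<lambda>K. Y closure_of (h ` e K)) ` {K. compactin X K}"
  have "closedin Y C \<and> connectedin Y C \<and> C \<noteq> {}" if C: "C \<in> \<C>" for C
  proof -
    obtain K where K: "compactin X K" "C = Y closure_of (h ` e K)"
      using C unfolding \<C>_def by blast
    have "connectedin Y (h ` e K)"
      using connectedin_continuous_map_image[OF h_cont end_of_connectedin[OF assms(6) K(1)]] .
    then show ?thesis
      using K end_of_nonempty[OF assms(6) K(1)]
      by (simp add: connectedin_closure_of closure_of_eq_empty connectedin_subset_topspace)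
  qed
  moreover have "\<exists>C\<in>\<C>. C \<subseteq> \<Inter>\<F>" if "finite \<F>" "\<F> \<subseteq> \<C>" for \<F>
    using end_closure_of_image_directed[OF assms(6) that[unfolded \<C>_def]] unfolding \<C>_def by blast
  ultimately have "\<Inter>\<C> \<noteq> {} \<and> connectedin Y (\<Inter>\<C>)"
    by (rule compact_Hausdorff_directed_Inter_connected[OF Y])
  moreover have "end_boundary X Y h e = \<Inter>\<C>"
    unfolding \<C>_def by (rule end_boundary_eq_Inter_closure_of[OF assms(1) h assms(5,6)])
  ultimately show ?thesis
    by simp
qed

end
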